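(* Let $F \subseteq \mathbb{Z}_2^\omega$ be a thin set. Then Ego has no winning strategy in the game $\mathcal{G}(F)$.
   Context: $\mathbb{Z}_2^\omega$ is the set of infinite binary sequences indexed by $\omega=\{0,1,2,\dots\}$; $\mathbb{Z}_2^+=\bigcup_{n\ge1}\mathbb{Z}_2^n$ is the set of nonempty finite binary words. A set $T\subseteq\mathbb{Z}_2^\omega$ is thin if for every $n\in\omega$ the map $x\mapsto x|_{\omega\setminus\{n\}}$ is injective on $T$ (equivalently, no two distinct elements of $T$ differ in exactly one coordinate). For $F\subseteq \mathbb{Z}_2^\omega$, $\mathcal{G}(F)$ is the following infinite two-player game of perfect information: players Ego and Alter alternately choose words in $\mathbb{Z}_2^+$, Ego moving first; if the moves are $\epsilon_0,\alpha_1,\epsilon_1,\alpha_2,\epsilon_2,\dots$, the outcome is the concatenation $\epsilon_0\alpha_1\epsilon_1\alpha_2\epsilon_2\cdots\in\mathbb{Z}_2^\omega$. Ego wins if the outcome lies in $F$, otherwise Alter wins. A strategy for Ego is a function $e:\bigcup_{n\ge0}(\mathbb{Z}_2^+)^n\to\mathbb{Z}_2^+$ (giving $\epsilon_0=e(\emptyset)$, $\epsilon_i=e(\alpha_1,\dots,\alpha_i)$), and a strategy for Alter is a function $a:\bigcup_{n\ge1}(\mathbb{Z}_2^+)^n\to\mathbb{Z}_2^+$ (giving $\alpha_i=a(\epsilon_0,\dots,\epsilon_{i-1})$). A strategy of Ego is winning if every play in which Ego follows it has outcome in $F$; a strategy of Alter is winning if every play in which Alter follows it has outcome not in $F$. 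*)

theory Defs
  imports "HOL-Library.FuncSet"
begin

definition thin :: "(nat \<Rightarrow> bool) set \<Rightarrow> bool" where
  "thin T \<longleftrightarrow> (\<forall>n. inj_on (\<lambda>x. restrict x (- {n})) T)"

text \<open>A strategy for Ego maps the list of Alter's previous moves
(alpha_1, ..., alpha_i) to Ego's next move epsilon_i. It is legal if it always
produces a nonempty word when fed nonempty words.\<close>

definition ego_strategy :: "(bool list list \<Rightarrow> bool list) \<Rightarrow> bool" where
  "ego_strategy e \<longleftrightarrow> (\<forall>as. (\<forall>w\<in>set as. w \<noteq> []) \<longrightarrow> e as \<noteq> [])"

text \<open>Given Ego's strategy and the sequence of Alter's moves
(alpha (0) = alpha_1, alpha (1) = alpha_2, ...), the moves of the play in order
epsilon_0, alpha_1, epsilon_1, alpha_2, ...\<close>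

fun play_moves :: "(bool list list \<Rightarrow> bool list) \<Rightarrow> (nat \<Rightarrow> bool list) \<Rightarrow> nat \<Rightarrow> bool list" where
  "play_moves e alpha k =
     (if even k then e (map alpha [0..<k div 2]) else alpha (k div 2))"

text \<open>The outcome: the concatenation of all moves. Since all moves are nonempty,
bit n is found within the first n+1 moves.\<close>

definition outcome :: "(nat \<Rightarrow> bool list) \<Rightarrow> (nat \<Rightarrow> bool)" where
  "outcome m = (\<lambda>n. concat (map m [0..<Suc n]) ! n)"

definition ego_winning :: "(nat \<Rightarrow> bool) set \<Rightarrow> (bool list list \<Rightarrow> bool list) \<Rightarrow> bool" where
  "ego_winning F e \<longleftrightarrow> ego_strategy e \<and>
     (\<forall>alpha. (\<forall>i. alpha i \<noteq> []) \<longrightarrow> outcome (play_moves e alpha) \<in> F)"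

end

theory Submission
  imports Defs "HOL-Library.Omega_Words_Fun"
begin

text \<open>Alter plays two games against Ego's strategy e at the same time and copies
Ego's answers in each game as her own moves in the other. In the first game she
opens with 0, in the second with 1 followed by Ego's reply to 0 in the first.
From then on every move of the first game reappears one position earlier in the
second, so the two outcomes differ only in the bit after Ego's opening word.
Both are won by Ego, so a thin winning set is impossible.\<close>

lemma le_length_concat_upt:
  assumes "\<forall>k. m k \<noteq> []"
  shows "K \<le> length (concat (map m [0..<K]))"
proof (induction K)
  case (Suc K)
  have "0 < length (m K)"
    using assms by simp
  moreover have "length (concat (map m [0..<Suc K])) = length (concat (map m [0..<K])) + length (m K)"
    by simp
  ultimately show ?case
    using Suc.IH by linarith
qed simp

lemma outcome_eq_concat_nth:
  assumes "\<forall>k. m k \<noteq> []" and "n < N"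
  shows "outcome m n = concat (map m [0..<N]) ! n"
proof -
  have "[0..<N] = [0..<Suc n] @ [Suc n..<N]"
    using assms(2) by (metis Suc_leI le_add_diff_inverse upt_add_eq_append zero_le)
  moreover have "n < length (concat (map m [0..<Suc n]))"
    using le_length_concat_upt[OF assms(1), of "Suc n"] by simp
  ultimately show ?thesis
    unfolding outcome_def by (simp add: nth_append del: upt_Suc)
qed

lemma outcome_unfold:
  assumes "\<forall>k. m k \<noteq> []"
  shows "outcome m = m 0 \<frown> outcome (\<lambda>k. m (Suc k))"
proof
  fix n
  have split: "concat (map m [0..<Suc n]) = m 0 @ concat (map (\<lambda>k. m (Suc k)) [0..<n])"
    by (simp add: upt_conv_Cons map_Suc_upt[symmetric] comp_def del: upt_Suc)
  show "outcome m n = (m 0 \<frown> outcome (\<lambda>k. m (Suc k))) n"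
  proof (cases "n < length (m 0)")
    case True
    then show ?thesis unfolding outcome_def split by (simp add: nth_append)
  next
    case False
    have "0 < length (m 0)"
      using assms by simp
    then have "n - length (m 0) < n"
      using False by linarith
    then have "outcome (\<lambda>k. m (Suc k)) (n - length (m 0))
        = concat (map (\<lambda>k. m (Suc k)) [0..<n]) ! (n - length (m 0))"
      using assms by (intro outcome_eq_concat_nth) auto
    then show ?thesis
      using False unfolding outcome_def split by (simp add: nth_append)
  qed
qed

lemma play_moves_nonempty:
  assumes "ego_strategy e" and "\<forall>i. alpha i \<noteq> []"
  shows "play_moves e alpha k \<noteq> []"
  using assms unfolding ego_strategy_def by auto

lemma thin_flip_bit:
  assumes "thin F" and "u \<frown> [False] \<frown> s \<in> F"
  shows "u \<frown> [True] \<frown> s \<notin> F"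
proof
  assume "u \<frown> [True] \<frown> s \<in> F"
  moreover have "restrict (u \<frown> [False] \<frown> s) (- {length u})
      = restrict (u \<frown> [True] \<frown> s) (- {length u})"
    by (auto simp: restrict_def conc_def nth_append)
  ultimately have "u \<frown> [False] \<frown> s = u \<frown> [True] \<frown> s"
    using assms unfolding thin_def inj_on_def by blast
  then have "(u \<frown> [False] \<frown> s) (length u) = (u \<frown> [True] \<frown> s) (length u)"
    by simp
  then show False by (simp add: conc_def)
qed

function (sequential) copycat_false :: "(bool list list \<Rightarrow> bool list) \<Rightarrow> nat \<Rightarrow> bool list"
  and copycat_true :: "(bool list list \<Rightarrow> bool list) \<Rightarrow> nat \<Rightarrow> bool list" where
  "copycat_false e 0 = [False]"
| "copycat_false e (Suc k) = e (map (copycat_true e) [0..<Suc k])"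
| "copycat_true e 0 = True # e [[False]]"
| "copycat_true e (Suc k) = e (map (copycat_false e) [0..<Suc (Suc k)])"
  by pat_completeness auto
termination
  by (relation "measure (case_sum (\<lambda>(e, n). 2 * n) (\<lambda>(e, n). Suc (2 * n)))") auto

lemma copycat_nonempty:
  assumes "ego_strategy e"
  shows "copycat_false e k \<noteq> []" and "copycat_true e k \<noteq> []"
  using assms
  by (induction e k and e k rule: copycat_false_copycat_true.induct)
    (auto simp: ego_strategy_def simp del: upt_Suc)

lemma play_moves_copycat_shift:
  "play_moves e (copycat_false e) (Suc (Suc (Suc k))) = play_moves e (copycat_true e) (Suc (Suc k))"
proof (cases "even k")
  case True
  then obtain j where "k = 2 * j" by blast
  then show ?thesis by simp
next
  case False
  then obtain j where "k = 2 * j + 1" by (blast elim: oddE)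
  then show ?thesis by simp
qed

lemma copycat_outcomes:
  assumes "ego_strategy e"
  obtains s where "outcome (play_moves e (copycat_false e)) = e [] \<frown> [False] \<frown> s"
    and "outcome (play_moves e (copycat_true e)) = e [] \<frown> [True] \<frown> s"
proof
  let ?p = "play_moves e (copycat_false e)" and ?q = "play_moves e (copycat_true e)"
  have p: "\<forall>k. ?p k \<noteq> []" and q: "\<forall>k. ?q k \<noteq> []"
    using assms copycat_nonempty play_moves_nonempty by blast+
  have first_moves: "?p 0 = e []" "?p 1 = [False]" "?q 0 = e []" "?q 1 = True # ?p 2"
    by (simp_all add: numeral_2_eq_2)
  have "outcome ?p = ?p 0 \<frown> ?p 1 \<frown> ?p 2 \<frown> outcome (\<lambda>k. ?p (Suc (Suc (Suc k))))"
    using p by (simp add: outcome_unfold[of ?p] outcome_unfold[of "\<lambda>k. ?p (Suc k)"]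
        outcome_unfold[of "\<lambda>k. ?p (Suc (Suc k))"] numeral_2_eq_2 del: play_moves.simps)
  then show "outcome ?p = e [] \<frown> [False] \<frown> ?p 2 \<frown> outcome (\<lambda>k. ?p (Suc (Suc (Suc k))))"
    by (simp only: first_moves)
  have "outcome ?q = ?q 0 \<frown> ?q 1 \<frown> outcome (\<lambda>k. ?q (Suc (Suc k)))"
    using q by (simp add: outcome_unfold[of ?q] outcome_unfold[of "\<lambda>k. ?q (Suc k)"]
        del: play_moves.simps)
  also have "(\<lambda>k. ?q (Suc (Suc k))) = (\<lambda>k. ?p (Suc (Suc (Suc k))))"
    by (simp only: play_moves_copycat_shift)
  finally show "outcome ?q = e [] \<frown> [True] \<frown> ?p 2 \<frown> outcome (\<lambda>k. ?p (Suc (Suc (Suc k))))"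
    by (simp only: first_moves conc_conc append.simps)
qed

theorem proposition6:
  fixes F :: "(nat \<Rightarrow> bool) set"
  assumes "thin F"
  shows "\<not> (\<exists>e. ego_winning F e)"
proof
  assume "\<exists>e. ego_winning F e"
  then obtain e where e: "ego_strategy e"
    and wins: "\<And>alpha. \<forall>i. alpha i \<noteq> [] \<Longrightarrow> outcome (play_moves e alpha) \<in> F"
    unfolding ego_winning_def by blast
  obtain s where "outcome (play_moves e (copycat_false e)) = e [] \<frown> [False] \<frown> s"
    and "outcome (play_moves e (copycat_true e)) = e [] \<frown> [True] \<frown> s"
    using copycat_outcomes[OF e] .
  then have "e [] \<frown> [False] \<frown> s \<in> F" and "e [] \<frown> [True] \<frown> s \<in> F"
    using wins copycat_nonempty[OF e] by metis+
  then show False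
    using thin_flip_bit[OF assms] by blast
qed

end
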